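(* Let $m,d \in \mathbb{N}$, let $A \in \mathbb{R}^{m\times d}$ with rows $a_1^\top,\dots,a_m^\top$ (so $a_i \in \mathbb{R}^d$), let $b=(b_1,\dots,b_m) \in \mathbb{R}^m$ and $c \in \mathbb{R}^d$. For $\hat{x} \in [0,1]^d$ let $P_{\hat{x}} := \bigotimes_{j=1}^d \mathrm{Bernoulli}(\hat{x}_j)$ be the product distribution on $\{0,1\}^d$ whose $j$-th coordinate equals $1$ with probability $\hat{x}_j$, independently across coordinates. Suppose there exists some $x \in \{0,1\}^d$ with $Ax \preccurlyeq b$. Define \[ \delta := \min\Big( \{1\} \cup \Big( \bigcup_{i=1}^m \{ a_i^\top x - b_i : x \in \{0,1\}^d \} \cap (0,\infty) \Big) \Big). \] Then for every $\mu > \dfrac{2\sqrt{d}\,\|c\|_2}{\delta}$, \[ \mathop{\arg\min}_{\hat{x} \in [0,1]^d} \Big( c^\top \hat{x} + \mu \sum_{i=1}^m \mathbb{E}_{x \sim P_{\hat{x}}}\big[\max\{a_i^\top x - b_i, 0\}\big] \Big) = \mathop{\arg\min}_{\hat{x} \in [0,1]^d:\ \sum_{i=1}^m \mathbb{E}_{x \sim P_{\hat{x}}}[\max\{a_i^\top x - b_i, 0\}] = 0} c^\top \hat{x}. \]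
   Context: $\preccurlyeq$ denotes componentwise inequality between vectors in $\mathbb{R}^m$. $\|c\|_2$ is the Euclidean norm. The left-hand side is the set of minimizers over the cube $[0,1]^d$ of the penalized objective; the right-hand side is the set of minimizers of $c^\top\hat{x}$ over those $\hat{x}\in[0,1]^d$ for which the total expected constraint violation is zero. *)

theory Defs
  imports "HOL-Probability.Probability"
begin

text \<open>Vectors in R^d are functions nat => real, with components outside {0..<d} fixed to 0
  (canonical representatives). The matrix A is given as A i j for i < m, j < d.\<close>

definition cube :: "nat \<Rightarrow> (nat \<Rightarrow> real) set" where
  "cube d = {x. (\<forall>j<d. 0 \<le> x j \<and> x j \<le> 1) \<and> (\<forall>j\<ge>d. x j = 0)}"

definition binvecs :: "nat \<Rightarrow> (nat \<Rightarrow> real) set" where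
  "binvecs d = {x. (\<forall>j<d. x j \<in> {0, 1}) \<and> (\<forall>j\<ge>d. x j = 0)}"

definition prodBern :: "nat \<Rightarrow> (nat \<Rightarrow> real) \<Rightarrow> (nat \<Rightarrow> bool) pmf" where
  "prodBern d xh = Pi_pmf {..<d} False (\<lambda>j. bernoulli_pmf (xh j))"

definition exp_viol ::
  "nat \<Rightarrow> nat \<Rightarrow> (nat \<Rightarrow> nat \<Rightarrow> real) \<Rightarrow> (nat \<Rightarrow> real) \<Rightarrow> (nat \<Rightarrow> real) \<Rightarrow> real" where
  "exp_viol m d A b xh = (\<Sum>i<m. measure_pmf.expectation (prodBern d xh)
      (\<lambda>x. max ((\<Sum>j<d. A i j * of_bool (x j)) - b i) 0))"

definition delta :: "nat \<Rightarrow> nat \<Rightarrow> (nat \<Rightarrow> nat \<Rightarrow> real) \<Rightarrow> (nat \<Rightarrow> real) \<Rightarrow> real" where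
  "delta m d A b = Min ({1} \<union> ((\<Union>i<m. {(\<Sum>j<d. A i j * x j) - b i | x. x \<in> binvecs d}) \<inter> {0<..}))"

definition enorm :: "nat \<Rightarrow> (nat \<Rightarrow> real) \<Rightarrow> real" where
  "enorm d c = sqrt (\<Sum>j<d. (c j)\<^sup>2)"

definition argmin_on :: "('a \<Rightarrow> real) \<Rightarrow> 'a set \<Rightarrow> 'a set" where
  "argmin_on f S = {x \<in> S. \<forall>y\<in>S. f x \<le> f y}"

end

theory Submission
  imports Defs
begin

(* Under the product Bernoulli distribution the penalized objective at xh is the expectation of
   its value at binary points, c x + mu * viol x.  Let z minimize c over the feasible binary
   points.  At an infeasible binary point x the violation is at least delta, while
   c z - c x <= sqrt d * |c| by Cauchy-Schwarz; so once mu * delta > sqrt d * |c| (the factor 2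
   of the hypothesis is slack), c z is a lower bound for the penalized objective on the cube,
   strict whenever the expected violation is positive, and it is attained at z.  An exact
   penalty of this kind does not change the set of minimizers. *)

lemma argmin_on_exact_penalty:
  fixes g P :: "'a \<Rightarrow> real"
  assumes z: "z \<in> S" "P z = 0"
    and lower: "\<And>x. x \<in> S \<Longrightarrow> g z \<le> g x + \<mu> * P x"
    and strict: "\<And>x. x \<in> S \<Longrightarrow> P x \<noteq> 0 \<Longrightarrow> g z < g x + \<mu> * P x"
  shows "argmin_on (\<lambda>x. g x + \<mu> * P x) S = argmin_on g {x \<in> S. P x = 0}"
proof (intro set_eqI iffI)
  fix x assume x: "x \<in> argmin_on (\<lambda>x. g x + \<mu> * P x) S"
  then have "g x + \<mu> * P x \<le> g z"
    using z unfolding argmin_on_def by force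
  then have "P x = 0"
    using strict x unfolding argmin_on_def by force
  with x show "x \<in> argmin_on g {x \<in> S. P x = 0}"
    unfolding argmin_on_def by force
next
  fix x assume x: "x \<in> argmin_on g {x \<in> S. P x = 0}"
  then have "g x \<le> g z"
    using z unfolding argmin_on_def by force
  with x lower show "x \<in> argmin_on (\<lambda>x. g x + \<mu> * P x) S"
    unfolding argmin_on_def by fastforce
qed

lemma expectation_gt_const_finite_pmf:
  fixes h :: "'a \<Rightarrow> real"
  assumes fin: "finite (set_pmf M)"
    and ge: "\<And>x. x \<in> set_pmf M \<Longrightarrow> t \<le> h x"
    and a: "a \<in> set_pmf M" "t < h a"
  shows "t < measure_pmf.expectation M h"
proof -
  have "measure_pmf.expectation M h - t = (\<Sum>x\<in>set_pmf M. (h x - t) * pmf M x)"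
    using sum_pmf_eq_1[OF fin order.refl]
    by (simp add: integral_measure_pmf_real[OF fin] left_diff_distrib sum_subtractf
        flip: sum_distrib_left)
  also have "0 < \<dots>"
    using fin a ge by (intro sum_pos2[of _ a]) (auto simp: pmf_positive)
  finally show ?thesis by simp
qed

lemma finite_binvecs: "finite (binvecs d)"
proof -
  have "binvecs d \<subseteq> {y. \<forall>j. (j \<in> {..<d} \<longrightarrow> y j \<in> {0, 1}) \<and> (j \<notin> {..<d} \<longrightarrow> y j = 0)}"
    unfolding binvecs_def by auto
  then show ?thesis
    by (rule finite_subset) (rule finite_set_of_finite_funs; simp)
qed

lemma binvecs_subset_cube: "binvecs d \<subseteq> cube d"
  unfolding binvecs_def cube_def by auto

definition violation ::
  "nat \<Rightarrow> nat \<Rightarrow> (nat \<Rightarrow> nat \<Rightarrow> real) \<Rightarrow> (nat \<Rightarrow> real) \<Rightarrow> (nat \<Rightarrow> real) \<Rightarrow> real" where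
  "violation m d A b y = (\<Sum>i<m. max ((\<Sum>j<d. A i j * y j) - b i) 0)"

lemma violation_eq_0_iff: "violation m d A b y = 0 \<longleftrightarrow> (\<forall>i<m. (\<Sum>j<d. A i j * y j) \<le> b i)"
proof -
  have max_eq_0: "max t 0 = 0 \<longleftrightarrow> t \<le> 0" for t :: real
    by (simp add: max_def)
  show ?thesis
    unfolding violation_def by (subst sum_nonneg_eq_0_iff) (simp_all add: max_eq_0 Ball_def)
qed

lemma Min_one_positive_part_pos:
  fixes S :: "'a :: linordered_semidom set"
  assumes "finite S"
  shows "0 < Min ({1} \<union> (S \<inter> {0<..}))"
  using assms by (subst Min_gr_iff) auto

lemma Min_one_positive_part_le:
  fixes S :: "'a :: linordered_semidom set"
  assumes "finite S" "s \<in> S" "0 < s"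
  shows "Min ({1} \<union> (S \<inter> {0<..})) \<le> s"
  using assms by (intro Min_le) auto

lemma finite_constraint_values:
  fixes m :: nat
  shows "finite (\<Union>i<m. {(\<Sum>j<d. A i j * y j) - b i | y. y \<in> binvecs d})"
proof -
  have image: "{(\<Sum>j<d. A i j * y j) - b i | y. y \<in> binvecs d}
      = (\<lambda>y. (\<Sum>j<d. A i j * y j) - b i) ` binvecs d" for i
    by (simp only: Setcompr_eq_image)
  show ?thesis
    unfolding image by (rule finite_UN_I) (simp_all add: finite_binvecs finite_imageI)
qed

lemma delta_pos: "0 < delta m d A b"
  unfolding delta_def by (rule Min_one_positive_part_pos[OF finite_constraint_values])

lemma delta_le_violated_constraint:
  assumes "y \<in> binvecs d" "i < m" "0 < (\<Sum>j<d. A i j * y j) - b i"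
  shows "delta m d A b \<le> (\<Sum>j<d. A i j * y j) - b i"
proof -
  have "(\<Sum>j<d. A i j * y j) - b i \<in> (\<Union>i<m. {(\<Sum>j<d. A i j * y j) - b i | y. y \<in> binvecs d})"
    using assms by blast
  then show ?thesis
    unfolding delta_def using assms(3)
    by (intro Min_one_positive_part_le[OF finite_constraint_values])
qed

lemma delta_le_violation:
  assumes y: "y \<in> binvecs d" and viol: "violation m d A b y \<noteq> 0"
  shows "delta m d A b \<le> violation m d A b y"
proof -
  obtain i where i: "i < m" "b i < (\<Sum>j<d. A i j * y j)"
    using viol by (auto simp: violation_eq_0_iff not_le)
  then have "delta m d A b \<le> max ((\<Sum>j<d. A i j * y j) - b i) 0"
    using delta_le_violated_constraint[OF y] by simp
  also have "\<dots> \<le> violation m d A b y"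
    unfolding violation_def using i by (intro member_le_sum) auto
  finally show ?thesis .
qed

lemma enorm_nonneg: "0 \<le> enorm d c"
  unfolding enorm_def by (simp add: sum_nonneg)

lemma cost_diff_le_on_cube:
  assumes "y \<in> cube d" "z \<in> cube d"
  shows "(\<Sum>j<d. c j * z j) - (\<Sum>j<d. c j * y j) \<le> sqrt (real d) * enorm d c"
proof -
  have "(\<Sum>j<d. c j * z j) - (\<Sum>j<d. c j * y j) \<le> (\<Sum>j<d. \<bar>c j\<bar> * \<bar>z j - y j\<bar>)"
    by (simp add: sum_subtractf[symmetric] right_diff_distrib[symmetric] abs_mult[symmetric]
        sum_mono)
  also have "\<dots> \<le> L2_set c {..<d} * L2_set (\<lambda>j. z j - y j) {..<d}"
    by (rule L2_set_mult_ineq)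
  also have "L2_set (\<lambda>j. z j - y j) {..<d} \<le> sqrt (real d)"
    unfolding L2_set_def
  proof (rule real_sqrt_le_mono)
    have "(\<Sum>j<d. (z j - y j)\<^sup>2) \<le> (\<Sum>j<d. 1)"
    proof (rule sum_mono)
      fix j assume "j \<in> {..<d}"
      then have "0 \<le> y j" "y j \<le> 1" "0 \<le> z j" "z j \<le> 1"
        using assms unfolding cube_def by auto
      then show "(z j - y j)\<^sup>2 \<le> 1" by (simp add: abs_square_le_1 abs_le_iff)
    qed
    then show "(\<Sum>j<d. (z j - y j)\<^sup>2) \<le> real d" by simp
  qed
  then have "L2_set c {..<d} * L2_set (\<lambda>j. z j - y j) {..<d} \<le> L2_set c {..<d} * sqrt (real d)"
    by (intro mult_left_mono) simp_all
  finally show ?thesis by (simp add: enorm_def L2_set_def mult.commute)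
qed

lemma set_prodBern_False_outside:
  assumes "x \<in> set_pmf (prodBern d xh)"
  shows "\<forall>j\<ge>d. \<not> x j"
proof -
  have "x \<in> {f. \<forall>j. j \<notin> {..<d} \<longrightarrow> f j = False}"
    using set_Pi_pmf_subset[of "{..<d}" False] assms unfolding prodBern_def by blast
  then show ?thesis by simp
qed

lemma finite_set_prodBern: "finite (set_pmf (prodBern d xh))"
proof (rule finite_subset)
  show "set_pmf (prodBern d xh) \<subseteq> {x. \<forall>j. (j \<in> {..<d} \<longrightarrow> x j \<in> UNIV) \<and> (j \<notin> {..<d} \<longrightarrow> x j = False)}"
    using set_prodBern_False_outside by (auto simp: not_less)
qed (rule finite_set_of_finite_funs; simp)

lemma integrable_prodBern [simp]: "integrable (measure_pmf (prodBern d xh)) (f :: _ \<Rightarrow> real)"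
  by (rule integrable_measure_pmf_finite[OF finite_set_prodBern])

lemma binvec_of_prodBern:
  "x \<in> set_pmf (prodBern d xh) \<Longrightarrow> (\<lambda>j. of_bool (x j)) \<in> binvecs d"
  using set_prodBern_False_outside unfolding binvecs_def by auto

lemma expectation_prodBern_component:
  assumes "xh \<in> cube d" "j < d"
  shows "measure_pmf.expectation (prodBern d xh) (\<lambda>x. of_bool (x j)) = xh j"
proof -
  have "measure_pmf.expectation (prodBern d xh) (\<lambda>x. of_bool (x j) :: real)
      = measure_pmf.expectation (map_pmf (\<lambda>x. x j) (prodBern d xh)) of_bool"
    by simp
  also have "map_pmf (\<lambda>x. x j) (prodBern d xh) = bernoulli_pmf (xh j)"
    unfolding prodBern_def using assms(2) by (subst Pi_pmf_component) auto
  finally show ?thesis using assms unfolding cube_def by simp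
qed

lemma expectation_prodBern_linear:
  assumes "xh \<in> cube d"
  shows "measure_pmf.expectation (prodBern d xh) (\<lambda>x. \<Sum>j<d. c j * of_bool (x j))
    = (\<Sum>j<d. c j * xh j)"
proof -
  have "measure_pmf.expectation (prodBern d xh) (\<lambda>x. \<Sum>j<d. c j * of_bool (x j))
      = (\<Sum>j<d. measure_pmf.expectation (prodBern d xh) (\<lambda>x. c j * of_bool (x j)))"
    by (rule Bochner_Integration.integral_sum) simp
  also have "\<dots> = (\<Sum>j<d. c j * xh j)"
    by (intro sum.cong refl)
      (simp only: integral_mult_right_zero expectation_prodBern_component[OF assms] lessThan_iff)
  finally show ?thesis .
qed

lemma exp_viol_eq_expectation:
  "exp_viol m d A b xh
    = measure_pmf.expectation (prodBern d xh) (\<lambda>x. violation m d A b (\<lambda>j. of_bool (x j)))"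
  unfolding exp_viol_def violation_def by (simp add: Bochner_Integration.integral_sum)

lemma bernoulli_pmf_of_bool: "bernoulli_pmf (of_bool t) = return_pmf t"
proof (rule pmf_eqI)
  fix i
  show "pmf (bernoulli_pmf (of_bool t)) i = pmf (return_pmf t) i"
    by (cases t; cases i) (simp_all add: pmf_return)
qed

lemma of_bool_eq_1_binvec:
  assumes "y \<in> binvecs d"
  shows "(\<lambda>j. of_bool (y j = 1)) = y"
proof (rule ext)
  fix j
  have "y j = 0 \<or> y j = 1"
    using assms unfolding binvecs_def by (cases "j < d") auto
  then show "of_bool (y j = 1) = y j" by auto
qed

lemma prodBern_binvec:
  assumes "y \<in> binvecs d"
  shows "prodBern d y = return_pmf (\<lambda>j. y j = 1)"
proof -
  have "prodBern d y = Pi_pmf {..<d} False (\<lambda>j. return_pmf (y j = 1))"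
    unfolding prodBern_def
    by (subst (1) of_bool_eq_1_binvec[OF assms, symmetric]) (simp only: bernoulli_pmf_of_bool)
  also have "\<dots> = return_pmf (\<lambda>j. if j \<in> {..<d} then y j = 1 else False)"
    by simp
  also have "(\<lambda>j. if j \<in> {..<d} then y j = 1 else False) = (\<lambda>j. y j = 1)"
  proof (rule ext)
    fix j
    show "(if j \<in> {..<d} then y j = 1 else False) = (y j = 1)"
      using assms unfolding binvecs_def by (cases "j < d") auto
  qed
  finally show ?thesis .
qed

lemma exp_viol_binvec:
  assumes "y \<in> binvecs d"
  shows "exp_viol m d A b y = violation m d A b y"
  by (simp add: exp_viol_eq_expectation prodBern_binvec[OF assms] of_bool_eq_1_binvec[OF assms])

lemma binvec_penalized_cost_ge:
  assumes z: "z \<in> binvecs d"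
    and z_min: "\<And>y. y \<in> binvecs d \<Longrightarrow> violation m d A b y = 0 \<Longrightarrow>
      (\<Sum>j<d. c j * z j) \<le> (\<Sum>j<d. c j * y j)"
    and mu: "sqrt (real d) * enorm d c < \<mu> * delta m d A b"
    and y: "y \<in> binvecs d"
  shows "(\<Sum>j<d. c j * z j) \<le> (\<Sum>j<d. c j * y j) + \<mu> * violation m d A b y"
    and "violation m d A b y \<noteq> 0 \<Longrightarrow>
      (\<Sum>j<d. c j * z j) < (\<Sum>j<d. c j * y j) + \<mu> * violation m d A b y"
proof -
  have "0 \<le> sqrt (real d) * enorm d c"
    by (simp add: enorm_nonneg)
  with mu delta_pos have "0 < \<mu>"
    by (metis le_less_trans zero_less_mult_pos2)
  show strict: "(\<Sum>j<d. c j * z j) < (\<Sum>j<d. c j * y j) + \<mu> * violation m d A b y"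
    if "violation m d A b y \<noteq> 0"
  proof -
    have "(\<Sum>j<d. c j * z j) - (\<Sum>j<d. c j * y j) \<le> sqrt (real d) * enorm d c"
      using y z binvecs_subset_cube by (intro cost_diff_le_on_cube) auto
    also have "\<dots> < \<mu> * delta m d A b" by (fact mu)
    also have "\<dots> \<le> \<mu> * violation m d A b y"
      using \<open>0 < \<mu>\<close> delta_le_violation[OF y that] by simp
    finally show ?thesis by simp
  qed
  show "(\<Sum>j<d. c j * z j) \<le> (\<Sum>j<d. c j * y j) + \<mu> * violation m d A b y"
    using z_min[OF y] strict by (cases "violation m d A b y = 0") fastforce+
qed

lemma cube_penalized_cost_ge:
  assumes z: "z \<in> binvecs d"
    and z_min: "\<And>y. y \<in> binvecs d \<Longrightarrow> violation m d A b y = 0 \<Longrightarrow>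
      (\<Sum>j<d. c j * z j) \<le> (\<Sum>j<d. c j * y j)"
    and mu: "sqrt (real d) * enorm d c < \<mu> * delta m d A b"
    and xh: "xh \<in> cube d"
  shows "(\<Sum>j<d. c j * z j) \<le> (\<Sum>j<d. c j * xh j) + \<mu> * exp_viol m d A b xh"
    and "exp_viol m d A b xh \<noteq> 0 \<Longrightarrow>
      (\<Sum>j<d. c j * z j) < (\<Sum>j<d. c j * xh j) + \<mu> * exp_viol m d A b xh"
proof -
  define M where "M = prodBern d xh"
  define h where "h x = (\<Sum>j<d. c j * of_bool (x j)) + \<mu> * violation m d A b (\<lambda>j. of_bool (x j))"
    for x :: "nat \<Rightarrow> bool"
  have objective: "(\<Sum>j<d. c j * xh j) + \<mu> * exp_viol m d A b xh = measure_pmf.expectation M h"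
    unfolding h_def M_def exp_viol_eq_expectation expectation_prodBern_linear[OF xh, symmetric]
    by simp
  have h_ge: "(\<Sum>j<d. c j * z j) \<le> h x" if "x \<in> set_pmf M" for x
    unfolding h_def
    using binvec_penalized_cost_ge(1)[OF z z_min mu binvec_of_prodBern] that M_def by simp
  show "(\<Sum>j<d. c j * z j) \<le> (\<Sum>j<d. c j * xh j) + \<mu> * exp_viol m d A b xh"
    unfolding objective by (intro measure_pmf.integral_ge_const AE_pmfI h_ge) (simp add: M_def)
  assume "exp_viol m d A b xh \<noteq> 0"
  have "\<exists>x\<in>set_pmf M. violation m d A b (\<lambda>j. of_bool (x j)) \<noteq> 0"
  proof (rule ccontr)
    assume "\<not> ?thesis"
    then have "measure_pmf.expectation M (\<lambda>x. violation m d A b (\<lambda>j. of_bool (x j))) = 0"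
      by (intro integral_eq_zero_AE AE_pmfI) auto
    with \<open>exp_viol m d A b xh \<noteq> 0\<close> show False
      unfolding exp_viol_eq_expectation M_def by simp
  qed
  then obtain x where x: "x \<in> set_pmf M" "violation m d A b (\<lambda>j. of_bool (x j)) \<noteq> 0"
    by blast
  then have "(\<Sum>j<d. c j * z j) < h x"
    unfolding h_def
    using binvec_penalized_cost_ge(2)[OF z z_min mu binvec_of_prodBern] M_def by simp
  then show "(\<Sum>j<d. c j * z j) < (\<Sum>j<d. c j * xh j) + \<mu> * exp_viol m d A b xh"
    unfolding objective using finite_set_prodBern h_ge x(1)
    by (intro expectation_gt_const_finite_pmf) (auto simp: M_def)
qed

lemma binvec_cost_minimizer_exists:
  assumes "\<exists>y\<in>binvecs d. violation m d A b y = 0"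
  shows "\<exists>z\<in>binvecs d. violation m d A b z = 0 \<and>
    (\<forall>y\<in>binvecs d. violation m d A b y = 0 \<longrightarrow> (\<Sum>j<d. c j * z j) \<le> (\<Sum>j<d. c j * y j))"
proof -
  let ?F = "{y \<in> binvecs d. violation m d A b y = 0}"
  have "finite ?F" "?F \<noteq> {}"
    using finite_binvecs assms by auto
  then obtain z where "is_arg_min (\<lambda>y. \<Sum>j<d. c j * y j) (\<lambda>y. y \<in> ?F) z"
    using ex_is_arg_min_if_finite by blast
  then show ?thesis
    unfolding is_arg_min_def by (auto simp: not_less)
qed

theorem theorem2:
  fixes m d :: nat and A :: "nat \<Rightarrow> nat \<Rightarrow> real" and b c :: "nat \<Rightarrow> real" and \<mu> :: real
  assumes feasible: "\<exists>x\<in>binvecs d. \<forall>i<m. (\<Sum>j<d. A i j * x j) \<le> b i"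
    and mu: "\<mu> > 2 * sqrt (real d) * enorm d c / delta m d A b"
  shows "argmin_on (\<lambda>xh. (\<Sum>j<d. c j * xh j) + \<mu> * exp_viol m d A b xh) (cube d)
       = argmin_on (\<lambda>xh. \<Sum>j<d. c j * xh j) {xh \<in> cube d. exp_viol m d A b xh = 0}"
proof -
  have "\<exists>y\<in>binvecs d. violation m d A b y = 0"
    using feasible by (simp add: violation_eq_0_iff)
  then obtain z where z: "z \<in> binvecs d" "violation m d A b z = 0"
    and z_min: "\<forall>y\<in>binvecs d. violation m d A b y = 0 \<longrightarrow>
      (\<Sum>j<d. c j * z j) \<le> (\<Sum>j<d. c j * y j)"
    using binvec_cost_minimizer_exists[where c = c] by blast
  have "2 * (sqrt (real d) * enorm d c) < \<mu> * delta m d A b"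
    using mu delta_pos by (simp add: pos_divide_less_eq)
  moreover have "0 \<le> sqrt (real d) * enorm d c"
    by (simp add: enorm_nonneg)
  ultimately have mu': "sqrt (real d) * enorm d c < \<mu> * delta m d A b"
    by linarith
  show ?thesis
  proof (rule argmin_on_exact_penalty)
    show "z \<in> cube d" using z(1) binvecs_subset_cube by blast
    show "exp_viol m d A b z = 0" using z by (simp add: exp_viol_binvec)
  qed (use cube_penalized_cost_ge[OF z(1) z_min[rule_format] mu'] in auto)
qed

end
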